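(* Let $L$ be a lattice with permutable congruences. Then $\operatorname{Con}_c L$ satisfies $\mathrm{URP}_1$ (that is, it satisfies $\mathrm{URP}_1$ at every one of its elements).
   Context: $\operatorname{Con}_c L$ denotes the $\{\vee,0\}$-semilattice of compact (i.e. finitely generated) congruences of a lattice $L$. A lattice has permutable congruences if $\alpha\beta=\beta\alpha$ for all congruences $\alpha,\beta$, where $\alpha\beta=\{(x,y): \exists z,\ (x,z)\in\alpha,\ (z,y)\in\beta\}$. Let $S$ be a $\{\vee,0\}$-semilattice and $\varepsilon\in S$. $S$ satisfies $\mathrm{URP}_1$ at $\varepsilon$ if for every family $((\alpha_i,\beta_i))_{i\in I}$ of elements of $S\times S$ with $\alpha_i\vee\beta_i=\varepsilon$ for all $i$, there exist a family $((\alpha_i^*,\beta_i^* ))_{i\in I}$ in $S\times S$ and a family $(\gamma_{i,j})_{(i,j)\in I\times I}$ in $S$ such that for all $i,j,k\in I$: (i) $\alpha_i^*\leq\alpha_i$, $\beta_i^*\leq\beta_i$, $\alpha_i^*\vee\beta_i^*=\varepsilon$; (ii) $\gamma_{i,j}\leq\alpha_i^*$ and $\gamma_{i,j}\leq\beta_j^*$; (iii) $\alpha_i^*\leq\alpha_j^*\vee\gamma_{i,j}$ and $\beta_j^*\leq\beta_i^*\vee\gamma_{i,j}$; (iv) $\gamma_{i,k}\leq\gamma_{i,j}\vee\gamma_{j,k}$. *)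

theory Defs
  imports Main
begin

definition lat_cong :: "('a::lattice \<times> 'a) set \<Rightarrow> bool" where
  "lat_cong \<theta> \<longleftrightarrow> equiv UNIV \<theta> \<and>
     (\<forall>a b c d. (a, b) \<in> \<theta> \<and> (c, d) \<in> \<theta> \<longrightarrow>
        (inf a c, inf b d) \<in> \<theta> \<and> (sup a c, sup b d) \<in> \<theta>)"

definition Cg :: "('a::lattice \<times> 'a) set \<Rightarrow> ('a \<times> 'a) set" where
  "Cg H = \<Inter>{\<theta>. lat_cong \<theta> \<and> H \<subseteq> \<theta>}"

definition cong_join :: "('a::lattice \<times> 'a) set \<Rightarrow> ('a \<times> 'a) set \<Rightarrow> ('a \<times> 'a) set" where
  "cong_join \<alpha> \<beta> = Cg (\<alpha> \<union> \<beta>)"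

definition Con_c :: "('a::lattice \<times> 'a) set set" where
  "Con_c = {\<theta>. lat_cong \<theta> \<and> (\<exists>H. finite H \<and> \<theta> = Cg H)}"

definition permutable_congruences :: "'a::lattice itself \<Rightarrow> bool" where
  "permutable_congruences (TYPE('a)) \<longleftrightarrow>
     (\<forall>\<alpha> \<beta> :: ('a \<times> 'a) set. lat_cong \<alpha> \<longrightarrow> lat_cong \<beta> \<longrightarrow> \<alpha> O \<beta> = \<beta> O \<alpha>)"

definition URP1_at :: "'s set \<Rightarrow> ('s \<Rightarrow> 's \<Rightarrow> 's) \<Rightarrow> ('s \<Rightarrow> 's \<Rightarrow> bool) \<Rightarrow> 's \<Rightarrow> 'i set \<Rightarrow> bool" where
  "URP1_at S join le eps I \<longleftrightarrow>
    (\<forall>\<alpha> \<beta> :: 'i \<Rightarrow> 's.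
      (\<forall>i\<in>I. \<alpha> i \<in> S \<and> \<beta> i \<in> S \<and> join (\<alpha> i) (\<beta> i) = eps) \<longrightarrow>
      (\<exists>\<alpha>' \<beta>' :: 'i \<Rightarrow> 's. \<exists>\<gamma> :: 'i \<Rightarrow> 'i \<Rightarrow> 's.
         (\<forall>i\<in>I. \<alpha>' i \<in> S \<and> \<beta>' i \<in> S) \<and>
         (\<forall>i\<in>I. \<forall>j\<in>I. \<gamma> i j \<in> S) \<and>
         (\<forall>i\<in>I. le (\<alpha>' i) (\<alpha> i) \<and> le (\<beta>' i) (\<beta> i) \<and> join (\<alpha>' i) (\<beta>' i) = eps) \<and>
         (\<forall>i\<in>I. \<forall>j\<in>I. le (\<gamma> i j) (\<alpha>' i) \<and> le (\<gamma> i j) (\<beta>' j)) \<and>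
         (\<forall>i\<in>I. \<forall>j\<in>I. le (\<alpha>' i) (join (\<alpha>' j) (\<gamma> i j)) \<and> le (\<beta>' j) (join (\<beta>' i) (\<gamma> i j))) \<and>
         (\<forall>i\<in>I. \<forall>j\<in>I. \<forall>k\<in>I. le (\<gamma> i k) (join (\<gamma> i j) (\<gamma> j k)))))"

end

theory Submission
  imports Defs
begin

text \<open>
  Write \<open>\<epsilon>\<close> as the congruence generated by finitely many pairs \<open>a \<le> b\<close>. Since \<open>\<alpha>\<^sub>i\<close> and
  \<open>\<beta>\<^sub>i\<close> permute, \<open>\<alpha>\<^sub>i \<or> \<beta>\<^sub>i = \<alpha>\<^sub>i \<circ> \<beta>\<^sub>i\<close>, so each generator \<open>(a, b)\<close> has an interpolant
  \<open>x\<^sub>i \<in> [a, b]\<close> with \<open>a \<equiv> x\<^sub>i (mod \<alpha>\<^sub>i)\<close> and \<open>x\<^sub>i \<equiv> b (mod \<beta>\<^sub>i)\<close>. Let \<open>\<alpha>\<^sub>i\<^sup>*\<close> be generated by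
  the pairs \<open>(a, x\<^sub>i)\<close>, \<open>\<beta>\<^sub>i\<^sup>*\<close> by the pairs \<open>(x\<^sub>i, b)\<close> and \<open>\<gamma>\<^sub>i\<^sub>j\<close> by the relations \<open>x\<^sub>i \<le> x\<^sub>j\<close>.
  All conditions of \<open>URP\<^sub>1\<close> then follow by reasoning with the preorder \<open>\<le>\<close> modulo a
  single congruence, using only \<open>a \<le> x\<^sub>i \<le> b\<close>.
\<close>

lemma lat_cong_refl: "lat_cong \<theta> \<Longrightarrow> (x, x) \<in> \<theta>"
  unfolding lat_cong_def equiv_def refl_on_def by blast

lemma lat_cong_sym: "lat_cong \<theta> \<Longrightarrow> (x, y) \<in> \<theta> \<Longrightarrow> (y, x) \<in> \<theta>"
  unfolding lat_cong_def equiv_def sym_def by blast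

lemma lat_cong_trans: "lat_cong \<theta> \<Longrightarrow> (x, y) \<in> \<theta> \<Longrightarrow> (y, z) \<in> \<theta> \<Longrightarrow> (x, z) \<in> \<theta>"
  unfolding lat_cong_def equiv_def trans_def by blast

lemma lat_cong_inf: "lat_cong \<theta> \<Longrightarrow> (a, b) \<in> \<theta> \<Longrightarrow> (c, d) \<in> \<theta> \<Longrightarrow> (inf a c, inf b d) \<in> \<theta>"
  unfolding lat_cong_def by blast

lemma lat_cong_sup: "lat_cong \<theta> \<Longrightarrow> (a, b) \<in> \<theta> \<Longrightarrow> (c, d) \<in> \<theta> \<Longrightarrow> (sup a c, sup b d) \<in> \<theta>"
  unfolding lat_cong_def by blast

lemma lat_congI:
  assumes "\<And>x. (x, x) \<in> \<theta>"
    and "\<And>x y. (x, y) \<in> \<theta> \<Longrightarrow> (y, x) \<in> \<theta>"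
    and "\<And>x y z. (x, y) \<in> \<theta> \<Longrightarrow> (y, z) \<in> \<theta> \<Longrightarrow> (x, z) \<in> \<theta>"
    and "\<And>a b c d. (a, b) \<in> \<theta> \<Longrightarrow> (c, d) \<in> \<theta> \<Longrightarrow> (inf a c, inf b d) \<in> \<theta>"
    and "\<And>a b c d. (a, b) \<in> \<theta> \<Longrightarrow> (c, d) \<in> \<theta> \<Longrightarrow> (sup a c, sup b d) \<in> \<theta>"
  shows "lat_cong \<theta>"
proof -
  have "equiv UNIV \<theta>"
  proof (rule equivI)
    show "refl_on UNIV \<theta>" by (rule refl_onI) (rule assms(1))
    show "sym \<theta>" by (rule symI) (rule assms(2))
    show "trans \<theta>" by (rule transI) (rule assms(3))
  qed simp
  then show ?thesis
    unfolding lat_cong_def using assms(4,5) by blast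
qed

lemma lat_cong_Inter:
  assumes "\<And>\<theta>. \<theta> \<in> F \<Longrightarrow> lat_cong \<theta>"
  shows "lat_cong (\<Inter>F)"
proof (rule lat_congI)
  fix x show "(x, x) \<in> \<Inter>F" using assms lat_cong_refl by blast
next
  fix x y assume "(x, y) \<in> \<Inter>F"
  then show "(y, x) \<in> \<Inter>F" using assms lat_cong_sym by blast
next
  fix x y z assume "(x, y) \<in> \<Inter>F" "(y, z) \<in> \<Inter>F"
  then show "(x, z) \<in> \<Inter>F" using assms lat_cong_trans by blast
next
  fix a b c d assume "(a, b) \<in> \<Inter>F" "(c, d) \<in> \<Inter>F"
  then show "(inf a c, inf b d) \<in> \<Inter>F" using assms lat_cong_inf by blast
next
  fix a b c d assume "(a, b) \<in> \<Inter>F" "(c, d) \<in> \<Inter>F"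
  then show "(sup a c, sup b d) \<in> \<Inter>F" using assms lat_cong_sup by blast
qed

lemma lat_cong_Cg: "lat_cong (Cg H)"
  unfolding Cg_def by (rule lat_cong_Inter) blast

lemma subset_Cg: "H \<subseteq> Cg H"
  unfolding Cg_def by blast

lemma Cg_least: "lat_cong \<theta> \<Longrightarrow> H \<subseteq> \<theta> \<Longrightarrow> Cg H \<subseteq> \<theta>"
  unfolding Cg_def by blast

lemma image_in_Cg: "p \<in> H \<Longrightarrow> f p \<in> Cg (f ` H)"
  using subset_Cg by blast

lemma Cg_image_subsetI: "lat_cong \<theta> \<Longrightarrow> (\<And>p. p \<in> H \<Longrightarrow> f p \<in> \<theta>) \<Longrightarrow> Cg (f ` H) \<subseteq> \<theta>"
  by (rule Cg_least) auto

lemma Cg_in_Con_c: "finite H \<Longrightarrow> Cg H \<in> Con_c"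
  unfolding Con_c_def using lat_cong_Cg by blast

lemma Con_c_lat_cong: "\<theta> \<in> Con_c \<Longrightarrow> lat_cong \<theta>"
  unfolding Con_c_def by blast

lemma lat_cong_cong_join: "lat_cong (cong_join \<alpha> \<beta>)"
  unfolding cong_join_def by (rule lat_cong_Cg)

lemma cong_join_ge1: "\<alpha> \<subseteq> cong_join \<alpha> \<beta>"
  unfolding cong_join_def using subset_Cg by blast

lemma cong_join_ge2: "\<beta> \<subseteq> cong_join \<alpha> \<beta>"
  unfolding cong_join_def using subset_Cg by blast

lemma cong_join_least: "lat_cong \<theta> \<Longrightarrow> \<alpha> \<subseteq> \<theta> \<Longrightarrow> \<beta> \<subseteq> \<theta> \<Longrightarrow> cong_join \<alpha> \<beta> \<subseteq> \<theta>"
  unfolding cong_join_def by (simp add: Cg_least)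

lemma lat_cong_convex:
  assumes "lat_cong \<theta>" "(a, b) \<in> \<theta>" "a \<le> x" "x \<le> b"
  shows "(a, x) \<in> \<theta>" and "(x, b) \<in> \<theta>"
proof -
  have "(sup a x, sup b x) \<in> \<theta>"
    using lat_cong_sup[OF assms(1,2) lat_cong_refl[OF assms(1)]] .
  then show xb: "(x, b) \<in> \<theta>"
    using assms(3,4) by (simp add: sup_absorb1 sup_absorb2)
  show "(a, x) \<in> \<theta>"
    using lat_cong_trans[OF assms(1,2) lat_cong_sym[OF assms(1) xb]] .
qed

lemma lat_cong_inf_sup_iff:
  assumes \<theta>: "lat_cong \<theta>"
  shows "(a, b) \<in> \<theta> \<longleftrightarrow> (inf a b, sup a b) \<in> \<theta>"
proof
  assume ab: "(a, b) \<in> \<theta>"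
  have "(inf a a, inf a b) \<in> \<theta>" "(sup a a, sup a b) \<in> \<theta>"
    using lat_cong_inf[OF \<theta> lat_cong_refl[OF \<theta>, of a] ab]
      lat_cong_sup[OF \<theta> lat_cong_refl[OF \<theta>, of a] ab]
    by auto
  then have "(a, inf a b) \<in> \<theta>" "(a, sup a b) \<in> \<theta>"
    by simp_all
  then show "(inf a b, sup a b) \<in> \<theta>"
    by (rule lat_cong_trans[OF \<theta> lat_cong_sym[OF \<theta>]])
next
  assume "(inf a b, sup a b) \<in> \<theta>"
  then have "(inf a b, a) \<in> \<theta>" "(inf a b, b) \<in> \<theta>"
    using lat_cong_convex(1)[OF \<theta>] by auto
  then show "(a, b) \<in> \<theta>"
    by (rule lat_cong_trans[OF \<theta> lat_cong_sym[OF \<theta>]])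
qed

lemma Con_c_comparable_generators:
  assumes "\<theta> \<in> Con_c"
  obtains H where "finite H" "\<forall>(a, b) \<in> H. a \<le> b" "\<theta> = Cg H"
proof -
  obtain H where "finite H" and \<theta>: "\<theta> = Cg H"
    using assms unfolding Con_c_def by blast
  define H' where "H' = (\<lambda>(a, b). (inf a b, sup a b)) ` H"
  have "Cg H' = Cg H"
  proof (rule antisym)
    show "Cg H' \<subseteq> Cg H"
      unfolding H'_def
    proof (rule Cg_image_subsetI[OF lat_cong_Cg], clarify)
      fix a b assume "(a, b) \<in> H"
      then show "(inf a b, sup a b) \<in> Cg H"
        using subset_Cg lat_cong_inf_sup_iff[OF lat_cong_Cg] by blast
    qed
    show "Cg H \<subseteq> Cg H'"
    proof (rule Cg_least[OF lat_cong_Cg], clarify)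
      fix a b assume "(a, b) \<in> H"
      then have "(inf a b, sup a b) \<in> Cg H'"
        unfolding H'_def using subset_Cg by fastforce
      then show "(a, b) \<in> Cg H'"
        using lat_cong_inf_sup_iff[OF lat_cong_Cg] by blast
    qed
  qed
  moreover have "finite H'" "\<forall>(a, b) \<in> H'. a \<le> b"
    unfolding H'_def using \<open>finite H\<close> by (auto intro: le_supI1)
  ultimately show thesis
    using that \<theta> by simp
qed

lemma lat_cong_relcomp:
  assumes \<alpha>: "lat_cong \<alpha>" and \<beta>: "lat_cong \<beta>" and permute: "\<alpha> O \<beta> = \<beta> O \<alpha>"
  shows "lat_cong (\<alpha> O \<beta>)"
proof (rule lat_congI)
  fix x show "(x, x) \<in> \<alpha> O \<beta>"
    using lat_cong_refl[OF \<alpha>] lat_cong_refl[OF \<beta>] by blast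
next
  fix x y assume "(x, y) \<in> \<alpha> O \<beta>"
  then have "(y, x) \<in> \<beta> O \<alpha>"
    using lat_cong_sym[OF \<alpha>] lat_cong_sym[OF \<beta>] by blast
  then show "(y, x) \<in> \<alpha> O \<beta>" using permute by simp
next
  fix x y z assume "(x, y) \<in> \<alpha> O \<beta>" "(y, z) \<in> \<alpha> O \<beta>"
  then have "(x, z) \<in> \<alpha> O (\<beta> O \<alpha>) O \<beta>" by blast
  then have "(x, z) \<in> \<alpha> O (\<alpha> O \<beta>) O \<beta>" using permute by simp
  then obtain u v w where "(x, u) \<in> \<alpha>" "(u, v) \<in> \<alpha>" "(v, w) \<in> \<beta>" "(w, z) \<in> \<beta>" by blast
  then show "(x, z) \<in> \<alpha> O \<beta>"
    using lat_cong_trans[OF \<alpha>, of x u v] lat_cong_trans[OF \<beta>, of v w z] by blast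
next
  fix a b c d assume "(a, b) \<in> \<alpha> O \<beta>" "(c, d) \<in> \<alpha> O \<beta>"
  then obtain y z where "(a, y) \<in> \<alpha>" "(y, b) \<in> \<beta>" "(c, z) \<in> \<alpha>" "(z, d) \<in> \<beta>" by blast
  then show "(inf a c, inf b d) \<in> \<alpha> O \<beta>"
    using lat_cong_inf[OF \<alpha>, of a y c z] lat_cong_inf[OF \<beta>, of y b z d] by blast
next
  fix a b c d assume "(a, b) \<in> \<alpha> O \<beta>" "(c, d) \<in> \<alpha> O \<beta>"
  then obtain y z where "(a, y) \<in> \<alpha>" "(y, b) \<in> \<beta>" "(c, z) \<in> \<alpha>" "(z, d) \<in> \<beta>" by blast
  then show "(sup a c, sup b d) \<in> \<alpha> O \<beta>"
    using lat_cong_sup[OF \<alpha>, of a y c z] lat_cong_sup[OF \<beta>, of y b z d] by blast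
qed

lemma cong_join_eq_relcomp:
  assumes \<alpha>: "lat_cong \<alpha>" and \<beta>: "lat_cong \<beta>" and permute: "\<alpha> O \<beta> = \<beta> O \<alpha>"
  shows "cong_join \<alpha> \<beta> = \<alpha> O \<beta>"
proof
  have "\<alpha> \<subseteq> \<alpha> O \<beta>" "\<beta> \<subseteq> \<alpha> O \<beta>"
    using lat_cong_refl[OF \<alpha>] lat_cong_refl[OF \<beta>] by auto
  then show "cong_join \<alpha> \<beta> \<subseteq> \<alpha> O \<beta>"
    using cong_join_least lat_cong_relcomp[OF assms] by blast
  show "\<alpha> O \<beta> \<subseteq> cong_join \<alpha> \<beta>"
  proof clarify
    fix x y z assume "(x, y) \<in> \<alpha>" "(y, z) \<in> \<beta>"
    then have "(x, y) \<in> cong_join \<alpha> \<beta>" "(y, z) \<in> cong_join \<alpha> \<beta>"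
      using cong_join_ge1 cong_join_ge2 by blast+
    then show "(x, z) \<in> cong_join \<alpha> \<beta>"
      by (rule lat_cong_trans[OF lat_cong_cong_join])
  qed
qed

text \<open>The interpolant \<open>z\<close> is projected into \<open>[a, b]\<close> as \<open>(z \<squnion> a) \<sqinter> b\<close>.\<close>

lemma relcomp_interpolant_between:
  assumes \<alpha>: "lat_cong \<alpha>" and \<beta>: "lat_cong \<beta>" and "(a, b) \<in> \<alpha> O \<beta>" "a \<le> b"
  shows "\<exists>x. a \<le> x \<and> x \<le> b \<and> (a, x) \<in> \<alpha> \<and> (x, b) \<in> \<beta>"
proof -
  obtain z where z: "(a, z) \<in> \<alpha>" "(z, b) \<in> \<beta>" using assms(3) by blast
  have "(inf (sup a a) b, inf (sup z a) b) \<in> \<alpha>"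
    using lat_cong_inf[OF \<alpha> lat_cong_sup[OF \<alpha> z(1) lat_cong_refl[OF \<alpha>]] lat_cong_refl[OF \<alpha>]] .
  moreover have "(inf (sup z a) b, inf (sup b a) b) \<in> \<beta>"
    using lat_cong_inf[OF \<beta> lat_cong_sup[OF \<beta> z(2) lat_cong_refl[OF \<beta>]] lat_cong_refl[OF \<beta>]] .
  ultimately show ?thesis
    using \<open>a \<le> b\<close>
    by (intro exI[of _ "inf (sup z a) b"]) (simp add: inf_absorb1 inf_absorb2 sup_absorb1 le_infI1)
qed

lemma permutable_interpolant_between:
  assumes "permutable_congruences TYPE('a::lattice)"
    and \<alpha>: "lat_cong \<alpha>" and \<beta>: "lat_cong (\<beta> :: ('a \<times> 'a) set)"
    and "(a, b) \<in> cong_join \<alpha> \<beta>" "a \<le> b"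
  shows "\<exists>x. a \<le> x \<and> x \<le> b \<and> (a, x) \<in> \<alpha> \<and> (x, b) \<in> \<beta>"
proof (rule relcomp_interpolant_between[OF \<alpha> \<beta> _ \<open>a \<le> b\<close>])
  have "\<alpha> O \<beta> = \<beta> O \<alpha>"
    using assms(1) \<alpha> \<beta> unfolding permutable_congruences_def by blast
  then show "(a, b) \<in> \<alpha> O \<beta>"
    using assms(4) cong_join_eq_relcomp[OF \<alpha> \<beta>] by simp
qed

text \<open>\<open>cong_le J x y\<close> says \<open>x/J \<le> y/J\<close> in the quotient lattice.\<close>

definition cong_le :: "('a::lattice \<times> 'a) set \<Rightarrow> 'a \<Rightarrow> 'a \<Rightarrow> bool" where
  "cong_le J x y \<longleftrightarrow> (inf x y, x) \<in> J"

lemma cong_le_of_le: "lat_cong J \<Longrightarrow> x \<le> y \<Longrightarrow> cong_le J x y"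
  unfolding cong_le_def by (simp add: inf_absorb1 lat_cong_refl)

lemma cong_le_of_cong:
  assumes J: "lat_cong J" and "(x, y) \<in> J"
  shows "cong_le J x y"
  using lat_cong_inf[OF J lat_cong_refl[OF J, of x] lat_cong_sym[OF J \<open>(x, y) \<in> J\<close>]]
  unfolding cong_le_def by simp

lemma cong_le_trans:
  assumes J: "lat_cong J" and "cong_le J x y" "cong_le J y z"
  shows "cong_le J x z"
proof -
  have xy: "(inf x y, x) \<in> J" and yz: "(inf y z, y) \<in> J"
    using assms(2,3) unfolding cong_le_def by auto
  have "(inf (inf x y) z, inf x z) \<in> J"
    using lat_cong_inf[OF J xy lat_cong_refl[OF J]] .
  moreover have "(inf (inf x y) z, inf x y) \<in> J"
    using lat_cong_inf[OF J lat_cong_refl[OF J] yz] by (simp add: inf_assoc)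
  ultimately have "(inf x z, inf x y) \<in> J"
    by (rule lat_cong_trans[OF J lat_cong_sym[OF J]])
  then show ?thesis
    unfolding cong_le_def using lat_cong_trans[OF J _ xy] by simp
qed

lemma cong_le_mono: "J \<subseteq> J' \<Longrightarrow> cong_le J x y \<Longrightarrow> cong_le J' x y"
  unfolding cong_le_def by blast

lemma cong_le_antisym:
  assumes J: "lat_cong J" and "cong_le J x y" "cong_le J y x"
  shows "(x, y) \<in> J"
proof -
  have "(inf x y, x) \<in> J" "(inf x y, y) \<in> J"
    using assms(2,3) unfolding cong_le_def by (auto simp: inf_commute)
  then show ?thesis
    by (rule lat_cong_trans[OF J lat_cong_sym[OF J]])
qed

text \<open>
  For interpolants \<open>x = x\<^sub>i\<close> and \<open>y = x\<^sub>j\<close> of the generators \<open>p = (a, b) \<in> H\<close>, these are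
  \<open>\<alpha>\<^sub>i\<^sup>*\<close>, \<open>\<beta>\<^sub>i\<^sup>*\<close> and \<open>\<gamma>\<^sub>i\<^sub>j\<close>.
\<close>

definition Cg_lower :: "('a::lattice \<times> 'a) set \<Rightarrow> ('a \<times> 'a \<Rightarrow> 'a) \<Rightarrow> ('a \<times> 'a) set" where
  "Cg_lower H x = Cg ((\<lambda>p. (fst p, x p)) ` H)"

definition Cg_upper :: "('a::lattice \<times> 'a) set \<Rightarrow> ('a \<times> 'a \<Rightarrow> 'a) \<Rightarrow> ('a \<times> 'a) set" where
  "Cg_upper H x = Cg ((\<lambda>p. (x p, snd p)) ` H)"

definition Cg_le :: "('a::lattice \<times> 'a) set \<Rightarrow> ('a \<times> 'a \<Rightarrow> 'a) \<Rightarrow> ('a \<times> 'a \<Rightarrow> 'a) \<Rightarrow> ('a \<times> 'a) set" where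
  "Cg_le H x y = Cg ((\<lambda>p. (inf (x p) (y p), x p)) ` H)"

lemma lat_cong_Cg_lower: "lat_cong (Cg_lower H x)"
  unfolding Cg_lower_def by (rule lat_cong_Cg)

lemma lat_cong_Cg_upper: "lat_cong (Cg_upper H x)"
  unfolding Cg_upper_def by (rule lat_cong_Cg)

lemma Cg_lower_in: "p \<in> H \<Longrightarrow> (fst p, x p) \<in> Cg_lower H x"
  unfolding Cg_lower_def by (rule image_in_Cg[where f = "\<lambda>p. (fst p, x p)"])

lemma Cg_upper_in: "p \<in> H \<Longrightarrow> (x p, snd p) \<in> Cg_upper H x"
  unfolding Cg_upper_def by (rule image_in_Cg[where f = "\<lambda>p. (x p, snd p)"])

lemma Cg_le_in: "p \<in> H \<Longrightarrow> cong_le (Cg_le H x y) (x p) (y p)"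
  unfolding Cg_le_def cong_le_def by (rule image_in_Cg[where f = "\<lambda>p. (inf (x p) (y p), x p)"])

lemma Cg_lower_subsetI:
  "lat_cong J \<Longrightarrow> (\<And>p. p \<in> H \<Longrightarrow> (fst p, x p) \<in> J) \<Longrightarrow> Cg_lower H x \<subseteq> J"
  unfolding Cg_lower_def by (rule Cg_image_subsetI)

lemma Cg_upper_subsetI:
  "lat_cong J \<Longrightarrow> (\<And>p. p \<in> H \<Longrightarrow> (x p, snd p) \<in> J) \<Longrightarrow> Cg_upper H x \<subseteq> J"
  unfolding Cg_upper_def by (rule Cg_image_subsetI)

lemma Cg_le_subsetI:
  "lat_cong J \<Longrightarrow> (\<And>p. p \<in> H \<Longrightarrow> cong_le J (x p) (y p)) \<Longrightarrow> Cg_le H x y \<subseteq> J"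
  unfolding Cg_le_def cong_le_def by (rule Cg_image_subsetI)

lemma Cg_lower_in_Con_c: "finite H \<Longrightarrow> Cg_lower H x \<in> Con_c"
  unfolding Cg_lower_def by (simp add: Cg_in_Con_c)

lemma Cg_upper_in_Con_c: "finite H \<Longrightarrow> Cg_upper H x \<in> Con_c"
  unfolding Cg_upper_def by (simp add: Cg_in_Con_c)

lemma Cg_le_in_Con_c: "finite H \<Longrightarrow> Cg_le H x y \<in> Con_c"
  unfolding Cg_le_def by (simp add: Cg_in_Con_c)

lemma cong_join_Cg_lower_Cg_upper:
  assumes between: "\<forall>p\<in>H. fst p \<le> x p \<and> x p \<le> snd p"
  shows "cong_join (Cg_lower H x) (Cg_upper H x) = Cg H"
proof
  have "(fst p, x p) \<in> Cg H \<and> (x p, snd p) \<in> Cg H" if "p \<in> H" for p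
    using lat_cong_convex[OF lat_cong_Cg, of "fst p" "snd p" H "x p"] between subset_Cg that by auto
  then show "cong_join (Cg_lower H x) (Cg_upper H x) \<subseteq> Cg H"
    by (intro cong_join_least Cg_lower_subsetI Cg_upper_subsetI lat_cong_Cg) auto
next
  let ?J = "cong_join (Cg_lower H x) (Cg_upper H x)"
  show "Cg H \<subseteq> ?J"
  proof (rule Cg_least[OF lat_cong_cong_join], clarify)
    fix a b assume "(a, b) \<in> H"
    then have "(a, x (a, b)) \<in> ?J" "(x (a, b), b) \<in> ?J"
      using Cg_lower_in[of "(a, b)" H x] Cg_upper_in[of "(a, b)" H x] cong_join_ge1 cong_join_ge2
      by force+
    then show "(a, b) \<in> ?J"
      by (rule lat_cong_trans[OF lat_cong_cong_join])
  qed
qed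

lemma Cg_le_subset_Cg_lower:
  assumes "\<forall>p\<in>H. fst p \<le> y p"
  shows "Cg_le H x y \<subseteq> Cg_lower H x"
proof (rule Cg_le_subsetI[OF lat_cong_Cg_lower])
  fix p assume "p \<in> H"
  have "cong_le (Cg_lower H x) (x p) (fst p)"
    using lat_cong_Cg_lower Cg_lower_in[OF \<open>p \<in> H\<close>] by (blast intro: cong_le_of_cong lat_cong_sym)
  moreover have "cong_le (Cg_lower H x) (fst p) (y p)"
    using assms \<open>p \<in> H\<close> by (simp add: cong_le_of_le lat_cong_Cg_lower)
  ultimately show "cong_le (Cg_lower H x) (x p) (y p)"
    by (rule cong_le_trans[OF lat_cong_Cg_lower])
qed

lemma Cg_le_subset_Cg_upper:
  assumes "\<forall>p\<in>H. x p \<le> snd p"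
  shows "Cg_le H x y \<subseteq> Cg_upper H y"
proof (rule Cg_le_subsetI[OF lat_cong_Cg_upper])
  fix p assume "p \<in> H"
  have "cong_le (Cg_upper H y) (x p) (snd p)"
    using assms \<open>p \<in> H\<close> by (simp add: cong_le_of_le lat_cong_Cg_upper)
  moreover have "cong_le (Cg_upper H y) (snd p) (y p)"
    using lat_cong_Cg_upper Cg_upper_in[OF \<open>p \<in> H\<close>] by (blast intro: cong_le_of_cong lat_cong_sym)
  ultimately show "cong_le (Cg_upper H y) (x p) (y p)"
    by (rule cong_le_trans[OF lat_cong_Cg_upper])
qed

lemma Cg_lower_subset_cong_join_Cg_le:
  assumes "\<forall>p\<in>H. fst p \<le> x p"
  shows "Cg_lower H x \<subseteq> cong_join (Cg_lower H y) (Cg_le H x y)"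
proof (rule Cg_lower_subsetI[OF lat_cong_cong_join])
  fix p assume "p \<in> H"
  let ?J = "cong_join (Cg_lower H y) (Cg_le H x y)"
  have "cong_le ?J (x p) (y p)"
    using cong_le_mono[OF cong_join_ge2 Cg_le_in[OF \<open>p \<in> H\<close>]] .
  moreover have "cong_le ?J (y p) (fst p)"
    using Cg_lower_in[OF \<open>p \<in> H\<close>] cong_join_ge1
    by (blast intro: cong_le_of_cong lat_cong_sym lat_cong_cong_join)
  ultimately have "cong_le ?J (x p) (fst p)"
    by (rule cong_le_trans[OF lat_cong_cong_join])
  moreover have "cong_le ?J (fst p) (x p)"
    using assms \<open>p \<in> H\<close> by (simp add: cong_le_of_le lat_cong_cong_join)
  ultimately show "(fst p, x p) \<in> ?J"
    by (rule cong_le_antisym[OF lat_cong_cong_join, rotated])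
qed

lemma Cg_upper_subset_cong_join_Cg_le:
  assumes "\<forall>p\<in>H. x p \<le> snd p \<and> y p \<le> snd p"
  shows "Cg_upper H y \<subseteq> cong_join (Cg_upper H x) (Cg_le H x y)"
proof (rule Cg_upper_subsetI[OF lat_cong_cong_join])
  fix p assume "p \<in> H"
  let ?J = "cong_join (Cg_upper H x) (Cg_le H x y)"
  have "cong_le ?J (snd p) (x p)"
    using Cg_upper_in[OF \<open>p \<in> H\<close>] cong_join_ge1
    by (blast intro: cong_le_of_cong lat_cong_sym lat_cong_cong_join)
  moreover have "cong_le ?J (x p) (y p)"
    using cong_le_mono[OF cong_join_ge2 Cg_le_in[OF \<open>p \<in> H\<close>]] .
  ultimately have "cong_le ?J (snd p) (y p)"
    by (rule cong_le_trans[OF lat_cong_cong_join])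
  moreover have "cong_le ?J (y p) (snd p)"
    using assms \<open>p \<in> H\<close> by (simp add: cong_le_of_le lat_cong_cong_join)
  ultimately show "(y p, snd p) \<in> ?J"
    by (rule cong_le_antisym[OF lat_cong_cong_join, rotated])
qed

lemma Cg_le_subset_cong_join_Cg_le: "Cg_le H x z \<subseteq> cong_join (Cg_le H x y) (Cg_le H y z)"
proof (rule Cg_le_subsetI[OF lat_cong_cong_join])
  fix p assume "p \<in> H"
  then show "cong_le (cong_join (Cg_le H x y) (Cg_le H y z)) (x p) (z p)"
    using cong_le_mono[OF cong_join_ge1 Cg_le_in] cong_le_mono[OF cong_join_ge2 Cg_le_in]
    by (blast intro: cong_le_trans[OF lat_cong_cong_join])
qed

lemma URP1_at_Cg_if_interpolants:
  assumes "finite H"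
    and interpolant: "\<And>\<alpha> \<beta> p. \<alpha> \<in> Con_c \<Longrightarrow> \<beta> \<in> Con_c \<Longrightarrow> cong_join \<alpha> \<beta> = Cg H \<Longrightarrow> p \<in> H \<Longrightarrow>
      \<exists>z. fst p \<le> z \<and> z \<le> snd p \<and> (fst p, z) \<in> \<alpha> \<and> (z, snd p) \<in> \<beta>"
  shows "URP1_at Con_c cong_join (\<subseteq>) (Cg H) I"
  unfolding URP1_at_def
proof (intro allI impI, goal_cases)
  case (1 \<alpha> \<beta>)
  then have "\<forall>i\<in>I. \<exists>xi. \<forall>p\<in>H.
      fst p \<le> xi p \<and> xi p \<le> snd p \<and> (fst p, xi p) \<in> \<alpha> i \<and> (xi p, snd p) \<in> \<beta> i"
    using interpolant by (intro ballI bchoice) blast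
  then obtain x where x: "\<forall>i\<in>I. \<forall>p\<in>H.
      fst p \<le> x i p \<and> x i p \<le> snd p \<and> (fst p, x i p) \<in> \<alpha> i \<and> (x i p, snd p) \<in> \<beta> i"
    by (rule bchoice[THEN exE])
  have lower: "Cg_lower H (x i) \<subseteq> \<alpha> i" if "i \<in> I" for i
    using that 1 x by (intro Cg_lower_subsetI Con_c_lat_cong) auto
  have upper: "Cg_upper H (x i) \<subseteq> \<beta> i" if "i \<in> I" for i
    using that 1 x by (intro Cg_upper_subsetI Con_c_lat_cong) auto
  have between: "\<forall>p\<in>H. fst p \<le> x i p \<and> x i p \<le> snd p" if "i \<in> I" for i
    using that x by blast
  show ?case
    by (intro exI[of _ "\<lambda>i. Cg_lower H (x i)"] exI[of _ "\<lambda>i. Cg_upper H (x i)"]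
        exI[of _ "\<lambda>i j. Cg_le H (x i) (x j)"])
      (simp add: \<open>finite H\<close> Cg_lower_in_Con_c Cg_upper_in_Con_c Cg_le_in_Con_c lower upper between
        cong_join_Cg_lower_Cg_upper Cg_le_subset_Cg_lower Cg_le_subset_Cg_upper
        Cg_lower_subset_cong_join_Cg_le Cg_upper_subset_cong_join_Cg_le Cg_le_subset_cong_join_Cg_le)
qed

theorem theorem1p5:
  fixes I :: "'i set"
  assumes "permutable_congruences TYPE('a::lattice)"
    and "(eps :: ('a \<times> 'a) set) \<in> Con_c"
  shows "URP1_at Con_c cong_join (\<subseteq>) eps I"
proof -
  obtain H where H: "finite H" "\<forall>(a, b) \<in> H. a \<le> b" "eps = Cg H"
    using Con_c_comparable_generators[OF assms(2)] by blast
  have "URP1_at Con_c cong_join (\<subseteq>) (Cg H) I"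
  proof (rule URP1_at_Cg_if_interpolants[OF H(1)])
    fix \<alpha> \<beta> :: "('a \<times> 'a) set" and p
    assume "\<alpha> \<in> Con_c" "\<beta> \<in> Con_c" "cong_join \<alpha> \<beta> = Cg H" "p \<in> H"
    then show "\<exists>z. fst p \<le> z \<and> z \<le> snd p \<and> (fst p, z) \<in> \<alpha> \<and> (z, snd p) \<in> \<beta>"
      using permutable_interpolant_between[OF assms(1) Con_c_lat_cong Con_c_lat_cong, of \<alpha> \<beta> "fst p" "snd p"]
        subset_Cg H(2) by fastforce
  qed
  then show ?thesis
    using H(3) by simp
qed

end
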